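(* Let $\Sigma=[\sigma_{hk}]$ be a $p\times p$ Hermitian positive definite complex matrix, $\alpha=(n_1,m_1,\dots,n_p,m_p)\in\mathbb Z_{\ge0}^{2p}$, $N=\{h:n_h\neq0\}$, $M=\{k:m_k\neq0\}$, $S^N_h=\{k\in M:\sigma_{hk}\neq0\}$ for $h\in N$, and $S^M_k=\{h\in N:\sigma_{hk}\neq0\}$ for $k\in M$. The moment $\nu(\alpha)$ of $\mathcal{CN}_p(\Sigma)$ equals zero if one of the following holds: (1) there exists $h\in N$ with $S^N_h=\emptyset$, or there exists $k\in M$ with $S^M_k=\emptyset$; (2) all sets $S^N_h$, $h\in N$, are nonempty and, for the partition $\{M_1,\dots,M_q\}$ of $M$ induced by the $S^N_h$'s, there exists $r\in\{1,\dots,q\}$ with $\sum_{i\in N:\ S^N_i\subset M_r}n_i\neq\sum_{j\in M_r}m_j$.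
   Context: $\mathcal{CN}_p(\Sigma)$ has density $\varphi(z;\Sigma)=\frac{1}{\pi^p\det\Sigma}\exp(-z^*\Sigma^{-1}z)$ on $\mathbb C^p\cong\mathbb R^{2p}$, and $\nu(\alpha)=\int_{\mathbb C^p}\prod_{j=1}^p z_j^{n_j}\bar z_j^{m_j}\varphi(z;\Sigma)\,dz$. The partition of $M$ induced by the $S^N_h$ is the set of connected components of the graph with vertex set $M$ in which two vertices are adjacent iff both belong to the same $S^N_h$ for some $h\in N$. *)

theory Defs
  imports "HOL-Analysis.Analysis"
begin

definition herm_form :: "complex^'n^'n \<Rightarrow> complex^'n \<Rightarrow> complex" where
  "herm_form A z = (\<Sum>i\<in>UNIV. \<Sum>j\<in>UNIV. cnj (z$i) * A$i$j * z$j)"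

definition hermitian :: "complex^'n^'n \<Rightarrow> bool" where
  "hermitian A \<longleftrightarrow> (\<forall>i j. A$i$j = cnj (A$j$i))"

definition herm_pos_def :: "complex^'n^'n \<Rightarrow> bool" where
  "herm_pos_def A \<longleftrightarrow> hermitian A \<and> (\<forall>z. z \<noteq> 0 \<longrightarrow> Re (herm_form A z) > 0)"

text \<open>Density of CN_p(Sigma) on C^p (Lebesgue measure on C^p = R^(2p)).\<close>
definition cgauss_density :: "complex^'n^'n \<Rightarrow> complex^'n \<Rightarrow> complex" where
  "cgauss_density S z =
     exp (- herm_form (matrix_inv S) z) / (complex_of_real (pi ^ CARD('n)) * det S)"

text \<open>Moment nu(alpha), alpha = (n_1,m_1,...,n_p,m_p) given by the two functions nn, mm.\<close>
definition cgauss_moment :: "complex^'n^'n \<Rightarrow> ('n \<Rightarrow> nat) \<Rightarrow> ('n \<Rightarrow> nat) \<Rightarrow> complex" where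
  "cgauss_moment S nn mm =
     (LINT z|lborel. (\<Prod>j\<in>UNIV. (z$j) ^ nn j * (cnj (z$j)) ^ mm j) * cgauss_density S z)"

definition Nset :: "('n \<Rightarrow> nat) \<Rightarrow> 'n set" where "Nset nn = {h. nn h \<noteq> 0}"
definition Mset :: "('n \<Rightarrow> nat) \<Rightarrow> 'n set" where "Mset mm = {k. mm k \<noteq> 0}"

definition SN :: "complex^'n^'n \<Rightarrow> ('n \<Rightarrow> nat) \<Rightarrow> 'n \<Rightarrow> 'n set" where
  "SN S mm h = {k \<in> Mset mm. S$h$k \<noteq> 0}"

definition SM :: "complex^'n^'n \<Rightarrow> ('n \<Rightarrow> nat) \<Rightarrow> 'n \<Rightarrow> 'n set" where
  "SM S nn k = {h \<in> Nset nn. S$h$k \<noteq> 0}"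

definition M_adj :: "complex^'n^'n \<Rightarrow> ('n \<Rightarrow> nat) \<Rightarrow> ('n \<Rightarrow> nat) \<Rightarrow> ('n \<times> 'n) set" where
  "M_adj S nn mm = {(k, k'). \<exists>h \<in> Nset nn. k \<in> SN S mm h \<and> k' \<in> SN S mm h}"

text \<open>Blocks of the induced partition of M: connected components of the graph on M.\<close>
definition M_blocks :: "complex^'n^'n \<Rightarrow> ('n \<Rightarrow> nat) \<Rightarrow> ('n \<Rightarrow> nat) \<Rightarrow> 'n set set" where
  "M_blocks S nn mm =
     {{k' \<in> Mset mm. (k, k') \<in> (M_adj S nn mm)\<^sup>*} | k. k \<in> Mset mm}"

end

theory Submission
  imports Defs "HOL-Probability.Distributions"
begin

text \<open>Write \<open>P = \<Sigma>\<^sup>-\<^sup>1\<close>. Integrating by parts against the weight \<open>exp (- z\<^sup>* P z)\<close> along the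
  coordinate directions gives Wick-type recurrences: raising \<open>n\<^sub>h\<close> by one produces
  \<open>\<Sum>\<^sub>k \<sigma>\<^sub>h\<^sub>k m\<^sub>k \<nu>(\<alpha> with m\<^sub>k lowered)\<close>, and symmetrically for \<open>m\<^sub>k\<close>. Unwinding them, \<open>\<nu>(\<alpha>)\<close>
  vanishes unless each factor \<open>z\<^sub>h\<close> can be paired with a factor \<open>cnj z\<^sub>k\<close> with \<open>\<sigma>\<^sub>h\<^sub>k \<noteq> 0\<close>,
  i.e. unless there is a nonnegative integer matrix with row sums \<open>n\<close>, column sums \<open>m\<close> and
  support in \<open>{\<sigma>\<^sub>h\<^sub>k \<noteq> 0}\<close>. Such a matrix links \<open>h\<close> only to \<open>S\<^sup>N\<^sub>h\<close> and conserves mass on every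
  connected component of \<open>M\<close>, which is impossible under (1) or (2).\<close>

section \<open>Couplings supported by a matrix\<close>

definition supported_coupling ::
    "complex^'n^'n \<Rightarrow> ('n \<Rightarrow> nat) \<Rightarrow> ('n \<Rightarrow> nat) \<Rightarrow> ('n \<Rightarrow> 'n \<Rightarrow> nat) \<Rightarrow> bool" where
  "supported_coupling S a b c \<longleftrightarrow>
     (\<forall>h. (\<Sum>k\<in>UNIV. c h k) = a h) \<and> (\<forall>k. (\<Sum>h\<in>UNIV. c h k) = b k) \<and>
     (\<forall>h k. c h k \<noteq> 0 \<longrightarrow> S$h$k \<noteq> 0)"

lemma supported_coupling_add_entry:
  fixes S :: "complex^'n::finite^'n"
  assumes c: "supported_coupling S (a(h := a h - 1)) (b(k := b k - 1)) c"
    and "a h \<noteq> 0" "b k \<noteq> 0" "S$h$k \<noteq> 0"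
  shows "supported_coupling S a b (\<lambda>h' k'. c h' k' + (if h' = h \<and> k' = k then 1 else 0))"
  using c assms(2-) unfolding supported_coupling_def
  by (auto simp: sum.distrib split: if_splits)

lemma vanishes_without_supported_coupling:
  fixes E :: "('n::finite \<Rightarrow> nat) \<Rightarrow> ('n \<Rightarrow> nat) \<Rightarrow> complex" and S :: "complex^'n^'n"
  assumes left: "\<And>a b h. E (a(h := Suc (a h))) b =
      (\<Sum>k\<in>UNIV. S$h$k * of_nat (b k) * E a (b(k := b k - 1)))"
    and right: "\<And>a b k. E a (b(k := Suc (b k))) =
      (\<Sum>h\<in>UNIV. S$h$k * of_nat (a h) * E (a(h := a h - 1)) b)"
    and "\<nexists>c. supported_coupling S a b c"
  shows "E a b = 0"
  using assms(3)
proof (induction "sum a UNIV" arbitrary: a b rule: less_induct)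
  case less
  show ?case
  proof (cases "\<exists>h. a h \<noteq> 0")
    case True
    then obtain h where h: "a h \<noteq> 0" by blast
    define a' where "a' = a(h := a h - 1)"
    have a: "a = a'(h := Suc (a' h))" using h by (auto simp: a'_def)
    have smaller: "sum a' UNIV < sum a UNIV"
      using h by (intro sum_strict_mono_ex1) (auto simp: a'_def)
    have "E a b = (\<Sum>k\<in>UNIV. S$h$k * of_nat (b k) * E a' (b(k := b k - 1)))"
      by (subst a, rule left)
    also have "\<dots> = 0"
    proof (rule sum.neutral, intro ballI)
      fix k
      show "S$h$k * of_nat (b k) * E a' (b(k := b k - 1)) = 0"
      proof (cases "S$h$k = 0 \<or> b k = 0")
        case False
        have "\<nexists>c. supported_coupling S a' (b(k := b k - 1)) c"
        proof
          assume "\<exists>c. supported_coupling S a' (b(k := b k - 1)) c"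
          then obtain c where "supported_coupling S a' (b(k := b k - 1)) c" ..
          then have "supported_coupling S a b (\<lambda>h' k'. c h' k' + (if h' = h \<and> k' = k then 1 else 0))"
            using supported_coupling_add_entry h False unfolding a'_def by blast
          with less.prems show False by blast
        qed
        then show ?thesis using less.hyps smaller by simp
      qed auto
    qed
    finally show ?thesis .
  next
    case False
    then have a0: "a = (\<lambda>_. 0)" by auto
    show ?thesis
    proof (cases "\<exists>k. b k \<noteq> 0")
      case True
      then obtain k where k: "b k \<noteq> 0" by blast
      define b' where "b' = b(k := b k - 1)"
      have b: "b = b'(k := Suc (b' k))" using k by (auto simp: b'_def)
      show ?thesis by (subst b, subst right) (simp add: a0)
    next
      case False
      then have "supported_coupling S a b (\<lambda>_ _. 0)"
        using a0 by (auto simp: supported_coupling_def)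
      with less.prems show ?thesis by blast
    qed
  qed
qed

lemma supported_coupling_le:
  assumes "supported_coupling S a b c"
  shows "c h k \<le> a h" "c h k \<le> b k"
  using assms member_le_sum[of h UNIV "\<lambda>h. c h k"] member_le_sum[of k UNIV "c h"]
  unfolding supported_coupling_def by auto

lemma supported_coupling_in_SN:
  assumes "supported_coupling S a b c" "c h k \<noteq> 0"
  shows "k \<in> SN S b h"
  using assms supported_coupling_le(2)[OF assms(1), of h k]
  by (auto simp: SN_def Mset_def supported_coupling_def)

text \<open>A supported coupling only moves mass along edges of the graph, so it preserves the
  mass of every connected component.\<close>
lemma supported_coupling_block_sum:
  fixes S :: "complex^'n::finite^'n"
  assumes c: "supported_coupling S a b c" and Mr: "Mr \<in> M_blocks S a b"
  shows "(\<Sum>j\<in>Mr. b j) = (\<Sum>i \<in> {i \<in> Nset a. SN S b i \<subseteq> Mr}. a i)"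
proof -
  from Mr obtain k0 where Mr_def: "Mr = {k \<in> Mset b. (k0, k) \<in> (M_adj S a b)\<^sup>*}"
    unfolding M_blocks_def by blast
  have row: "(\<Sum>j\<in>Mr. c h j) = (if h \<in> Nset a \<and> SN S b h \<subseteq> Mr then a h else 0)" for h
  proof (cases "h \<in> Nset a \<and> SN S b h \<subseteq> Mr")
    case True
    have "(\<Sum>j\<in>Mr. c h j) = (\<Sum>j\<in>UNIV. c h j)"
      using True supported_coupling_in_SN[OF c] by (intro sum.mono_neutral_left) auto
    then show ?thesis using True c by (simp add: supported_coupling_def)
  next
    case False
    have "c h j = 0" if j: "j \<in> Mr" for j
    proof (rule ccontr)
      assume cj: "c h j \<noteq> 0"
      then have hN: "h \<in> Nset a" using supported_coupling_le(1)[OF c, of h j] by (simp add: Nset_def)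
      with False obtain k where k: "k \<in> SN S b h" "k \<notin> Mr" by blast
      have "(j, k) \<in> M_adj S a b"
        using supported_coupling_in_SN[OF c cj] k hN unfolding M_adj_def by blast
      moreover have "(k0, j) \<in> (M_adj S a b)\<^sup>*" using j Mr_def by blast
      ultimately have "(k0, k) \<in> (M_adj S a b)\<^sup>*" by (rule rtrancl_into_rtrancl[rotated])
      with k show False by (auto simp: Mr_def SN_def)
    qed
    then show ?thesis using False by auto
  qed
  have "(\<Sum>j\<in>Mr. b j) = (\<Sum>j\<in>Mr. \<Sum>h\<in>UNIV. c h j)"
    using c by (simp add: supported_coupling_def)
  also have "\<dots> = (\<Sum>h\<in>UNIV. \<Sum>j\<in>Mr. c h j)"
    by (rule sum.swap)
  also have "\<dots> = (\<Sum>i \<in> {i \<in> Nset a. SN S b i \<subseteq> Mr}. a i)"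
    by (simp add: row sum.If_cases Int_def)
  finally show ?thesis .
qed

lemma no_supported_coupling:
  fixes S :: "complex^'n::finite^'n"
  assumes "(\<exists>h \<in> Nset a. SN S b h = {}) \<or> (\<exists>k \<in> Mset b. SM S a k = {})
           \<or> (\<exists>Mr \<in> M_blocks S a b.
                 (\<Sum>i \<in> {i \<in> Nset a. SN S b i \<subseteq> Mr}. a i) \<noteq> (\<Sum>j \<in> Mr. b j))"
  shows "\<nexists>c. supported_coupling S a b c"
proof
  assume "\<exists>c. supported_coupling S a b c"
  then obtain c where c: "supported_coupling S a b c" ..
  show False
    using assms
  proof (elim disjE bexE)
    fix h assume h: "h \<in> Nset a" "SN S b h = {}"
    then have "(\<Sum>k\<in>UNIV. c h k) \<noteq> 0" using c by (simp add: Nset_def supported_coupling_def)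
    then obtain k where "c h k \<noteq> 0" by (meson sum.neutral)
    then show False using supported_coupling_in_SN[OF c] h by blast
  next
    fix k assume k: "k \<in> Mset b" "SM S a k = {}"
    then have "(\<Sum>h\<in>UNIV. c h k) \<noteq> 0" using c by (simp add: Mset_def supported_coupling_def)
    then obtain h where ch: "c h k \<noteq> 0" by (meson sum.neutral)
    then have "h \<in> Nset a" using supported_coupling_le(1)[OF c, of h k] by (simp add: Nset_def)
    then show False using c ch k by (auto simp: SM_def supported_coupling_def)
  next
    fix Mr assume "Mr \<in> M_blocks S a b"
      "(\<Sum>i \<in> {i \<in> Nset a. SN S b i \<subseteq> Mr}. a i) \<noteq> (\<Sum>j \<in> Mr. b j)"
    then show False using supported_coupling_block_sum[OF c] by simp
  qed
qed

section \<open>Gaussian integrability\<close>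

lemma integrable_exp_neg_sq:
  assumes "b > (0::real)"
  shows "integrable lborel (\<lambda>x::real. exp (- b * x\<^sup>2))"
proof -
  have "has_bochner_integral lborel (\<lambda>x::real. exp (- x\<^sup>2) * x ^ (2 * 0))
      (sqrt pi * (fact (2 * 0) / (2 ^ (2 * 0) * fact 0)))"
    using has_bochner_integral_even_function[OF gaussian_moment_even_pos[where k = 0]] by simp
  then have "integrable lborel (\<lambda>x::real. exp (- x\<^sup>2))" by (simp add: has_bochner_integral_iff)
  from lborel_integrable_real_affine[OF this, of "sqrt b" 0] assms
  have "integrable lborel (\<lambda>x. exp (- (sqrt b * x)\<^sup>2))" by simp
  moreover have "(sqrt b * x)\<^sup>2 = b * x\<^sup>2" for x using assms by (simp add: power_mult_distrib)
  ultimately show ?thesis by simp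
qed

lemma norm_sum_Basis_power2:
  fixes f :: "'a::euclidean_space \<Rightarrow> real"
  shows "(norm (\<Sum>u\<in>Basis. f u *\<^sub>R u))\<^sup>2 = (\<Sum>u\<in>Basis. (f u)\<^sup>2)"
proof -
  let ?x = "\<Sum>u\<in>Basis. f u *\<^sub>R u"
  have "(norm ?x)\<^sup>2 = ?x \<bullet> ?x" by (simp add: power2_norm_eq_inner)
  also have "\<dots> = (\<Sum>b\<in>Basis. (?x \<bullet> b) * (?x \<bullet> b))" by (rule euclidean_inner)
  finally show ?thesis by (simp add: inner_sum_left_Basis power2_eq_square)
qed

lemma borel_measurable_continuous_on_UNIV:
  "continuous_on UNIV f \<Longrightarrow> f \<in> borel_measurable lborel"
  using borel_measurable_continuous_onI by (simp add: measurable_lborel1)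

text \<open>Fubini over the coordinates: the Gaussian factorises into one-dimensional ones.\<close>
lemma integrable_exp_neg_norm_sq:
  assumes "b > (0::real)"
  shows "integrable lborel (\<lambda>z::'a::euclidean_space. exp (- b * (norm z)\<^sup>2))"
proof (rule integrableI_bounded)
  show "(\<lambda>z::'a. exp (- b * (norm z)\<^sup>2)) \<in> borel_measurable lborel"
    by (intro borel_measurable_continuous_on_UNIV continuous_intros)
  interpret P: product_sigma_finite "\<lambda>_::'a. lborel :: real measure" by standard
  have "(\<integral>\<^sup>+ z. ennreal (norm (exp (- b * (norm (z::'a))\<^sup>2))) \<partial>lborel)
     = (\<integral>\<^sup>+ z. ennreal (exp (- b * (norm (z::'a))\<^sup>2))
          \<partial>distr (\<Pi>\<^sub>M u\<in>Basis. lborel) borel (\<lambda>f. \<Sum>u\<in>Basis. f u *\<^sub>R u))"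
    by (subst lborel_eq[symmetric]) simp
  also have "\<dots> = (\<integral>\<^sup>+ f. ennreal (exp (- b * (norm (\<Sum>u\<in>Basis. f u *\<^sub>R u :: 'a))\<^sup>2))
                      \<partial>(\<Pi>\<^sub>M u\<in>(Basis::'a set). lborel))"
    by (subst nn_integral_distr) (auto intro!: borel_measurable_continuous_onI continuous_intros)
  also have "\<dots> = (\<integral>\<^sup>+ f. (\<Prod>u\<in>(Basis::'a set). ennreal (exp (- b * (f u)\<^sup>2)))
                      \<partial>(\<Pi>\<^sub>M u\<in>(Basis::'a set). lborel))"
    by (intro nn_integral_cong)
       (simp add: norm_sum_Basis_power2 sum_distrib_left exp_sum prod_ennreal[symmetric])
  also have "\<dots> = (\<Prod>u\<in>(Basis::'a set). \<integral>\<^sup>+ x. ennreal (exp (- b * x\<^sup>2)) \<partial>lborel)"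
    by (rule P.product_nn_integral_prod) auto
  also have "\<dots> < \<infinity>"
  proof -
    have "(\<integral>\<^sup>+ x. ennreal (norm (exp (- b * x\<^sup>2))) \<partial>lborel) < \<infinity>"
      using integrable_exp_neg_sq[OF assms] by (simp add: integrable_iff_bounded)
    then show ?thesis by (simp add: less_top[symmetric] ennreal_prod_eq_top power_eq_top_ennreal)
  qed
  finally show "(\<integral>\<^sup>+ z. ennreal (norm (exp (- b * (norm (z::'a))\<^sup>2))) \<partial>lborel) < \<infinity>" .
qed

lemma one_plus_power_le_exp_sq:
  assumes "c > (0::real)" "r \<ge> 0"
  shows "(1 + r) ^ K \<le> exp (real K ^ 2 / (4 * c)) * exp (c * r\<^sup>2)"
proof -
  have "(1 + r) ^ K \<le> exp r ^ K" using assms by (intro power_mono) auto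
  also have "\<dots> = exp (real K * r)" by (simp add: exp_of_nat_mult)
  also have "\<dots> \<le> exp (real K ^ 2 / (4 * c) + c * r\<^sup>2)"
  proof -
    have "0 \<le> c * (r - real K / (2 * c))\<^sup>2" using assms by simp
    also have "c * (r - real K / (2 * c))\<^sup>2 = c * r\<^sup>2 - real K * r + real K ^ 2 / (4 * c)"
      using assms by (simp add: power2_eq_square field_simps)
    finally show ?thesis by simp
  qed
  finally show ?thesis by (simp add: exp_add)
qed

lemma integrable_gaussian_bounded:
  fixes f :: "'a::euclidean_space \<Rightarrow> 'b::{banach, second_countable_topology}"
  assumes "f \<in> borel_measurable lborel" and "a > 0"
    and bound: "\<And>z. norm (f z) \<le> C * (1 + norm z) ^ K * exp (- a * (norm z)\<^sup>2)"
  shows "integrable lborel f"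
proof (rule Bochner_Integration.integrable_bound[OF _ assms(1)])
  let ?C = "\<bar>C\<bar> * exp (real K ^ 2 / (4 * (a/2)))"
  show "integrable lborel (\<lambda>z::'a. ?C * exp (- (a/2) * (norm z)\<^sup>2))"
    using integrable_exp_neg_norm_sq[of "a/2"] assms(2) by (intro integrable_mult_right) auto
  show "AE z in lborel. norm (f z) \<le> norm (?C * exp (- (a/2) * (norm z)\<^sup>2))"
  proof (intro AE_I2)
    fix z :: 'a
    have "C * (1 + norm z) ^ K * exp (- a * (norm z)\<^sup>2)
        \<le> \<bar>C\<bar> * (1 + norm z) ^ K * exp (- a * (norm z)\<^sup>2)"
      by (intro mult_right_mono) auto
    with bound[of z] have "norm (f z) \<le> \<bar>C\<bar> * (1 + norm z) ^ K * exp (- a * (norm z)\<^sup>2)"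
      by linarith
    also have "\<dots> \<le> \<bar>C\<bar> * (exp (real K ^ 2 / (4 * (a/2))) * exp ((a/2) * (norm z)\<^sup>2))
                    * exp (- a * (norm z)\<^sup>2)"
      using one_plus_power_le_exp_sq[of "a/2" "norm z" K] assms(2)
      by (intro mult_right_mono mult_left_mono) auto
    also have "\<dots> = ?C * exp (- (a/2) * (norm z)\<^sup>2)"
      by (simp add: mult.assoc exp_add[symmetric])
    finally show "norm (f z) \<le> norm (?C * exp (- (a/2) * (norm z)\<^sup>2))" by simp
  qed
qed

lemma gaussian_bound_translate:
  fixes f :: "'a::real_normed_vector \<Rightarrow> 'b::real_normed_vector"
  assumes bound: "\<And>y. norm (f y) \<le> C * (1 + norm y) ^ K * exp (- l * (norm y)\<^sup>2)"
    and "C \<ge> 0" "l > 0" "norm w \<le> R"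
  shows "norm (f (z + w)) \<le>
    (C * (1 + R) ^ K * exp (l * R\<^sup>2)) * (1 + norm z) ^ K * exp (- (l/2) * (norm z)\<^sup>2)"
proof -
  let ?y = "z + w"
  have "R \<ge> 0" using assms(4) norm_ge_zero[of w] by linarith
  have "1 + norm ?y \<le> 1 + norm z + R"
    using norm_triangle_ineq[of z w] assms(4) by linarith
  also have "\<dots> \<le> (1 + R) * (1 + norm z)"
    using mult_nonneg_nonneg[OF \<open>R \<ge> 0\<close> norm_ge_zero[of z]] by (simp add: algebra_simps)
  finally have "1 + norm ?y \<le> (1 + R) * (1 + norm z)" .
  then have power: "(1 + norm ?y) ^ K \<le> (1 + R) ^ K * (1 + norm z) ^ K"
    unfolding power_mult_distrib[symmetric] by (rule power_mono) simp
  have "norm z \<le> norm ?y + R"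
    using norm_triangle_ineq4[of ?y w] assms(4) by simp
  then have "(norm z)\<^sup>2 \<le> (norm ?y + R)\<^sup>2" by (intro power_mono) auto
  also have "\<dots> \<le> 2 * (norm ?y)\<^sup>2 + 2 * R\<^sup>2"
    using sum_squares_bound[of "norm ?y" R] by (simp add: power2_eq_square algebra_simps)
  finally have sq: "(norm z)\<^sup>2 \<le> 2 * (norm ?y)\<^sup>2 + 2 * R\<^sup>2" .
  have "- l * (norm ?y)\<^sup>2 \<le> l * R\<^sup>2 + (- (l/2) * (norm z)\<^sup>2)"
    using mult_left_mono[OF sq, of "l/2"] assms(3) by (simp add: algebra_simps)
  then have exp: "exp (- l * (norm ?y)\<^sup>2) \<le> exp (l * R\<^sup>2) * exp (- (l/2) * (norm z)\<^sup>2)"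
    by (simp add: exp_add[symmetric])
  have "C * (1 + norm ?y) ^ K * exp (- l * (norm ?y)\<^sup>2)
      \<le> C * ((1 + R) ^ K * (1 + norm z) ^ K) * (exp (l * R\<^sup>2) * exp (- (l/2) * (norm z)\<^sup>2))"
    using \<open>C \<ge> 0\<close> \<open>R \<ge> 0\<close> by (intro mult_mono mult_left_mono power exp) auto
  then show ?thesis using bound[of ?y] by (simp add: algebra_simps)
qed

section \<open>Polynomially bounded functions\<close>

definition poly_bounded :: "('a::real_normed_vector \<Rightarrow> 'b::real_normed_vector) \<Rightarrow> bool" where
  "poly_bounded f \<longleftrightarrow> (\<exists>C K. \<forall>x. norm (f x) \<le> C * (1 + norm x) ^ K)"

lemma poly_boundedE:
  assumes "poly_bounded f"
  obtains C K where "C \<ge> 0" "\<And>x. norm (f x) \<le> C * (1 + norm x) ^ K"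
proof -
  from assms obtain C K where CK: "\<And>x. norm (f x) \<le> C * (1 + norm x) ^ K"
    unfolding poly_bounded_def by blast
  moreover have "norm (f 0) \<le> C" using CK[of 0] by simp
  then have "C \<ge> 0" using norm_ge_zero order_trans by blast
  ultimately show thesis by (rule that[rotated])
qed

lemma one_plus_norm_power_mono:
  "m \<le> n \<Longrightarrow> (1 + norm x) ^ m \<le> (1 + norm x) ^ n"
  by (rule power_increasing) auto

lemma poly_bounded_const [simp]: "poly_bounded (\<lambda>_. c)"
  unfolding poly_bounded_def by (rule exI[of _ "norm c"], rule exI[of _ 0]) simp

lemma poly_bounded_add:
  assumes "poly_bounded f" "poly_bounded g"
  shows "poly_bounded (\<lambda>x. f x + g x)"
proof -
  obtain C K where C: "C \<ge> 0" "\<And>x. norm (f x) \<le> C * (1 + norm x) ^ K" using poly_boundedE[OF assms(1)] by blast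
  obtain D L where D: "D \<ge> 0" "\<And>x. norm (g x) \<le> D * (1 + norm x) ^ L" using poly_boundedE[OF assms(2)] by blast
  have "norm (f x + g x) \<le> (C + D) * (1 + norm x) ^ (K + L)" for x
  proof -
    have "norm (f x + g x) \<le> C * (1 + norm x) ^ K + D * (1 + norm x) ^ L"
      using norm_triangle_ineq[of "f x" "g x"] C(2)[of x] D(2)[of x] by linarith
    also have "\<dots> \<le> C * (1 + norm x) ^ (K + L) + D * (1 + norm x) ^ (K + L)"
      using C(1) D(1) by (intro add_mono mult_left_mono one_plus_norm_power_mono) auto
    finally show ?thesis by (simp add: algebra_simps)
  qed
  then show ?thesis unfolding poly_bounded_def by blast
qed

lemma poly_bounded_uminus: "poly_bounded f \<Longrightarrow> poly_bounded (\<lambda>x. - f x)"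
  by (simp add: poly_bounded_def)

lemma poly_bounded_diff:
  "poly_bounded f \<Longrightarrow> poly_bounded g \<Longrightarrow> poly_bounded (\<lambda>x. f x - g x)"
  using poly_bounded_add[of f "\<lambda>x. - g x"] poly_bounded_uminus[of g] by simp

lemma poly_bounded_mult:
  fixes f g :: "'a::real_normed_vector \<Rightarrow> 'b::real_normed_algebra"
  assumes "poly_bounded f" "poly_bounded g"
  shows "poly_bounded (\<lambda>x. f x * g x)"
proof -
  obtain C K where C: "C \<ge> 0" "\<And>x. norm (f x) \<le> C * (1 + norm x) ^ K" using poly_boundedE[OF assms(1)] by blast
  obtain D L where D: "D \<ge> 0" "\<And>x. norm (g x) \<le> D * (1 + norm x) ^ L" using poly_boundedE[OF assms(2)] by blast
  have "norm (f x * g x) \<le> (C * D) * (1 + norm x) ^ (K + L)" for x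
  proof -
    have "norm (f x * g x) \<le> (C * (1 + norm x) ^ K) * (D * (1 + norm x) ^ L)"
      using C(1) by (intro order_trans[OF norm_mult_ineq mult_mono[OF C(2) D(2)]]) auto
    then show ?thesis by (simp add: power_add algebra_simps)
  qed
  then show ?thesis unfolding poly_bounded_def by blast
qed

lemma poly_bounded_sum:
  fixes f :: "'i \<Rightarrow> 'a::real_normed_vector \<Rightarrow> 'b::real_normed_vector"
  shows "(\<And>i. i \<in> I \<Longrightarrow> poly_bounded (f i)) \<Longrightarrow> poly_bounded (\<lambda>x. \<Sum>i\<in>I. f i x)"
  by (induction I rule: infinite_finite_induct) (auto intro: poly_bounded_add)

lemma poly_bounded_prod:
  fixes f :: "'i \<Rightarrow> 'a::real_normed_vector \<Rightarrow> 'b::{real_normed_algebra_1, comm_ring_1}"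
  shows "(\<And>i. i \<in> I \<Longrightarrow> poly_bounded (f i)) \<Longrightarrow> poly_bounded (\<lambda>x. \<Prod>i\<in>I. f i x)"
  by (induction I rule: infinite_finite_induct) (auto intro: poly_bounded_mult)

lemma poly_bounded_power:
  fixes f :: "'a::real_normed_vector \<Rightarrow> 'b::{real_normed_algebra_1, comm_ring_1}"
  shows "poly_bounded f \<Longrightarrow> poly_bounded (\<lambda>x. f x ^ n)"
  using poly_bounded_prod[of "{..<n}" "\<lambda>_. f"] by simp

lemma poly_bounded_cnj: "poly_bounded f \<Longrightarrow> poly_bounded (\<lambda>x. cnj (f x))"
  by (simp add: poly_bounded_def)

lemma poly_bounded_vec_nth: "poly_bounded (\<lambda>x::'b::real_normed_vector^'n. x $ j)"
  unfolding poly_bounded_def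
  by (rule exI[of _ 1], rule exI[of _ 1]) (auto intro: order_trans[OF Finite_Cartesian_Product.norm_nth_le])

section \<open>Positive definite Hermitian forms and Gaussian moments\<close>

lemma herm_form_eq_mult_vec: "herm_form A z = (\<Sum>i\<in>UNIV. cnj (z$i) * (A *v z)$i)"
  by (simp add: herm_form_def matrix_vector_mult_def sum_distrib_left mult.assoc)

lemma vec_scaleR_nth: "(c *\<^sub>R z) $ i = complex_of_real c * z $ i"
  unfolding vector_scaleR_component by (rule scaleR_conv_of_real)

lemma herm_form_scaleR: "herm_form A (c *\<^sub>R z) = complex_of_real (c\<^sup>2) * herm_form A z"
  unfolding herm_form_def vec_scaleR_nth
  by (simp add: sum_distrib_left power2_eq_square mult_ac)

lemma herm_pos_def_matrix_inv:
  fixes S :: "complex^'n^'n"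
  assumes "herm_pos_def S"
  shows "S ** matrix_inv S = mat 1 \<and> matrix_inv S ** S = mat 1"
proof -
  have "x = 0" if "S *v x = 0" for x
  proof -
    from that have "herm_form S x = 0" by (simp add: herm_form_eq_mult_vec)
    then show "x = 0" using assms by (auto simp: herm_pos_def_def)
  qed
  then have "invertible S" by (simp add: invertible_left_inverse matrix_left_invertible_ker)
  then show ?thesis unfolding invertible_def matrix_inv_def by (rule someI_ex)
qed

lemma herm_form_matrix_inv_pos:
  fixes S :: "complex^'n^'n"
  assumes "herm_pos_def S" "z \<noteq> 0"
  shows "Re (herm_form (matrix_inv S) z) > 0"
proof -
  define w where "w = matrix_inv S *v z"
  have "S *v w = z"
    using herm_pos_def_matrix_inv[OF assms(1)] by (simp add: w_def matrix_vector_mul_assoc)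
  then have "w \<noteq> 0" using assms(2) by auto
  have "herm_form (matrix_inv S) z = cnj (herm_form S w)"
    by (simp add: herm_form_eq_mult_vec \<open>S *v w = z\<close> w_def[symmetric] mult.commute)
  then show ?thesis using assms(1) \<open>w \<noteq> 0\<close> by (simp add: herm_pos_def_def)
qed

text \<open>By homogeneity it suffices to bound the form from below on the unit sphere, where it
  attains a positive minimum by compactness.\<close>
lemma herm_form_coercive:
  fixes P :: "complex^'n^'n"
  assumes pos: "\<And>z. z \<noteq> 0 \<Longrightarrow> Re (herm_form P z) > 0"
  obtains l where "l > 0" "\<And>z. l * (norm z)\<^sup>2 \<le> Re (herm_form P z)"
proof -
  let ?f = "\<lambda>z::complex^'n. Re (herm_form P z)"
  have cont: "continuous_on UNIV ?f" unfolding herm_form_def by (intro continuous_intros)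
  obtain x1 :: "complex^'n" where "norm x1 = 1" using vector_choose_size[of 1] by auto
  then have "sphere (0::complex^'n) 1 \<noteq> {}" by auto
  from continuous_attains_inf[OF compact_sphere this continuous_on_subset[OF cont]]
  obtain z0 where z0: "z0 \<in> sphere 0 1" "\<And>y. y \<in> sphere 0 1 \<Longrightarrow> ?f z0 \<le> ?f y" by auto
  have "?f z0 > 0" using z0(1) by (intro pos) auto
  moreover have "?f z0 * (norm z)\<^sup>2 \<le> ?f z" for z
  proof (cases "z = 0")
    case True then show ?thesis by (simp add: herm_form_def)
  next
    case False
    define u where "u = (1 / norm z) *\<^sub>R z"
    have u: "u \<in> sphere 0 1" using False by (simp add: u_def)
    have z: "z = norm z *\<^sub>R u" using False by (simp add: u_def)
    have "?f z = (norm z)\<^sup>2 * ?f u" by (subst z, simp only: herm_form_scaleR) simp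
    then show ?thesis using mult_left_mono[OF z0(2)[OF u], of "(norm z)\<^sup>2"]
      by (simp add: mult.commute)
  qed
  ultimately show thesis by (rule that)
qed

definition cmonomial :: "('n \<Rightarrow> nat) \<Rightarrow> ('n \<Rightarrow> nat) \<Rightarrow> complex^'n \<Rightarrow> complex" where
  "cmonomial a b z = (\<Prod>j\<in>UNIV. (z$j) ^ a j * (cnj (z$j)) ^ b j)"

definition gauss_weight :: "complex^'n^'n \<Rightarrow> complex^'n \<Rightarrow> complex" where
  "gauss_weight P z = exp (- herm_form P z)"

definition gauss_moment :: "complex^'n^'n \<Rightarrow> ('n \<Rightarrow> nat) \<Rightarrow> ('n \<Rightarrow> nat) \<Rightarrow> complex" where
  "gauss_moment P a b = (LINT z|lborel. cmonomial a b z * gauss_weight P z)"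

lemma cmonomial_upd_left:
  "cmonomial (a(i := k)) b z =
     (z$i ^ k * cnj (z$i) ^ b i) * (\<Prod>j\<in>UNIV-{i}. z$j ^ a j * cnj (z$j) ^ b j)"
  unfolding cmonomial_def by (subst prod.remove[of UNIV i]) (auto intro!: prod.cong)

lemma cmonomial_upd_right:
  "cmonomial a (b(i := k)) z =
     (z$i ^ a i * cnj (z$i) ^ k) * (\<Prod>j\<in>UNIV-{i}. z$j ^ a j * cnj (z$j) ^ b j)"
  unfolding cmonomial_def by (subst prod.remove[of UNIV i]) (auto intro!: prod.cong)

lemma cmonomial_Suc_left: "cmonomial (a(h := Suc (a h))) b z = z$h * cmonomial a b z"
  using cmonomial_upd_left[of a h "a h" b z] by (simp add: cmonomial_upd_left)

lemma cmonomial_Suc_right: "cmonomial a (b(k := Suc (b k))) z = cnj (z$k) * cmonomial a b z"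
  using cmonomial_upd_right[of a b k "b k" z] by (simp add: cmonomial_upd_right)

lemma continuous_on_cmonomial: "continuous_on UNIV (cmonomial a b)"
  unfolding cmonomial_def by (intro continuous_intros)

lemma poly_bounded_cmonomial: "poly_bounded (cmonomial a b)"
  unfolding cmonomial_def
  by (intro poly_bounded_prod poly_bounded_mult poly_bounded_power poly_bounded_cnj poly_bounded_vec_nth)

lemma continuous_on_gauss_weight: "continuous_on UNIV (gauss_weight P)"
  unfolding gauss_weight_def herm_form_def by (intro continuous_intros)

section \<open>Integration by parts along lines\<close>

text \<open>Where \<open>a i = 0\<close>, the truncated exponent \<open>a i - 1\<close> is harmless: its term carries the
  factor \<open>of_nat (a i)\<close>.\<close>
definition monomial_dir_deriv ::
    "('n \<Rightarrow> nat) \<Rightarrow> ('n \<Rightarrow> nat) \<Rightarrow> complex^'n \<Rightarrow> complex^'n \<Rightarrow> complex" where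
  "monomial_dir_deriv a b v z =
     (\<Sum>i\<in>UNIV. of_nat (a i) * v$i * cmonomial (a(i := a i - 1)) b z
        + of_nat (b i) * cnj (v$i) * cmonomial a (b(i := b i - 1)) z)"

definition herm_form_dir_deriv :: "complex^'n^'n \<Rightarrow> complex^'n \<Rightarrow> complex^'n \<Rightarrow> complex" where
  "herm_form_dir_deriv P v z =
     (\<Sum>i\<in>UNIV. \<Sum>j\<in>UNIV. cnj (v$i) * P$i$j * z$j + cnj (z$i) * P$i$j * v$j)"

definition weighted_monomial_dir_deriv ::
    "complex^'n^'n \<Rightarrow> ('n \<Rightarrow> nat) \<Rightarrow> ('n \<Rightarrow> nat) \<Rightarrow> complex^'n \<Rightarrow> complex^'n \<Rightarrow> complex" where
  "weighted_monomial_dir_deriv P a b v z =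
     (monomial_dir_deriv a b v z - herm_form_dir_deriv P v z * cmonomial a b z) * gauss_weight P z"

text \<open>The restriction of the weighted monomial to the line through \<open>z\<close> in direction \<open>v\<close>,
  continued to complex parameters \<open>w\<close> by writing \<open>cnj (z + w v)\<close> as \<open>cnj z + w cnj v\<close>.
  Being holomorphic in \<open>w\<close>, it gives access to the complex mean value inequality.\<close>
definition line_continuation ::
    "complex^'n^'n \<Rightarrow> ('n \<Rightarrow> nat) \<Rightarrow> ('n \<Rightarrow> nat) \<Rightarrow> complex^'n \<Rightarrow> complex^'n \<Rightarrow> complex \<Rightarrow> complex" where
  "line_continuation P a b v z w =
     (\<Prod>j\<in>UNIV. (z$j + w * v$j) ^ a j * (cnj (z$j) + w * cnj (v$j)) ^ b j) *
     exp (- (\<Sum>i\<in>UNIV. \<Sum>j\<in>UNIV. (cnj (z$i) + w * cnj (v$i)) * P$i$j * (z$j + w * v$j)))"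

lemma vec_add_scaleR_nth: "(z + t *\<^sub>R v) $ j = z$j + complex_of_real t * v$j"
  by (simp only: vector_add_component vec_scaleR_nth)

lemma line_continuation_of_real:
  "line_continuation P a b v z (complex_of_real t) =
     cmonomial a b (z + t *\<^sub>R v) * gauss_weight P (z + t *\<^sub>R v)"
  unfolding line_continuation_def cmonomial_def gauss_weight_def herm_form_def vec_add_scaleR_nth
  by simp

lemma line_continuation_shift:
  "line_continuation P a b v z (complex_of_real s + w) = line_continuation P a b v (z + s *\<^sub>R v) w"
  unfolding line_continuation_def vec_add_scaleR_nth by (simp add: algebra_simps)

lemma has_field_derivative_line_continuation_0:
  "(line_continuation P a b v z has_field_derivative weighted_monomial_dir_deriv P a b v z) (at 0)"
proof -
  define f where "f = (\<lambda>j w. (z$j + w * v$j) ^ a j * (cnj (z$j) + w * cnj (v$j)) ^ b j)"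
  define f' where "f' = (\<lambda>j. of_nat (a j) * v$j * (z$j ^ (a j - 1) * cnj (z$j) ^ b j)
      + of_nat (b j) * cnj (v$j) * (z$j ^ a j * cnj (z$j) ^ (b j - 1)))"
  define Q where "Q = (\<lambda>w. \<Sum>i\<in>UNIV. \<Sum>j\<in>UNIV. (cnj (z$i) + w * cnj (v$i)) * P$i$j * (z$j + w * v$j))"
  have "(f j has_field_derivative f' j) (at 0)" for j
    unfolding f_def f'_def by (auto intro!: derivative_eq_intros simp: algebra_simps)
  then have "((\<lambda>w. \<Prod>j\<in>UNIV. f j w) has_field_derivative
      (\<Sum>i\<in>UNIV. f' i * (\<Prod>j\<in>UNIV-{i}. f j 0))) (at 0)"
    by (rule has_field_derivative_prod)
  moreover have "(\<Sum>i\<in>UNIV. f' i * (\<Prod>j\<in>UNIV-{i}. f j 0)) = monomial_dir_deriv a b v z"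
    unfolding monomial_dir_deriv_def cmonomial_upd_left cmonomial_upd_right f_def f'_def
    by (intro sum.cong refl) (simp add: algebra_simps)
  ultimately have prod: "((\<lambda>w. \<Prod>j\<in>UNIV. f j w) has_field_derivative monomial_dir_deriv a b v z) (at 0)"
    by simp
  have "(Q has_field_derivative herm_form_dir_deriv P v z) (at 0)"
    unfolding Q_def herm_form_dir_deriv_def
    by (auto intro!: derivative_eq_intros sum.cong simp: algebra_simps)
  then have exp: "((\<lambda>w. exp (- Q w)) has_field_derivative
      exp (- Q 0) * (- herm_form_dir_deriv P v z)) (at 0)"
    by (auto intro!: derivative_eq_intros)
  have "Q 0 = herm_form P z" by (simp add: Q_def herm_form_def)
  moreover have "(\<Prod>j\<in>UNIV. f j 0) = cmonomial a b z" by (simp add: f_def cmonomial_def)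
  moreover have "line_continuation P a b v z = (\<lambda>w. (\<Prod>j\<in>UNIV. f j w) * exp (- Q w))"
    by (simp add: fun_eq_iff line_continuation_def f_def Q_def)
  ultimately show ?thesis
    using DERIV_mult[OF prod exp]
    by (simp add: weighted_monomial_dir_deriv_def gauss_weight_def algebra_simps)
qed

lemma has_field_derivative_line_continuation:
  "(line_continuation P a b v z has_field_derivative weighted_monomial_dir_deriv P a b v (z + s *\<^sub>R v))
     (at (complex_of_real s))"
proof -
  have "(\<lambda>w. line_continuation P a b v z (w + complex_of_real s)) = line_continuation P a b v (z + s *\<^sub>R v)"
    by (rule ext) (metis line_continuation_shift add.commute)
  then have "((\<lambda>w. line_continuation P a b v z (w + complex_of_real s)) has_field_derivative
      weighted_monomial_dir_deriv P a b v (z + s *\<^sub>R v)) (at 0)"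
    by (simp add: has_field_derivative_line_continuation_0)
  then show ?thesis
    using DERIV_shift[of "line_continuation P a b v z" _ 0 "complex_of_real s"] by simp
qed

lemma poly_bounded_herm_form_dir_deriv: "poly_bounded (herm_form_dir_deriv P v)"
  unfolding herm_form_dir_deriv_def
  by (intro poly_bounded_sum poly_bounded_add poly_bounded_mult poly_bounded_const
        poly_bounded_cnj poly_bounded_vec_nth)

lemma poly_bounded_monomial_dir_deriv: "poly_bounded (monomial_dir_deriv a b v)"
  unfolding monomial_dir_deriv_def
  by (intro poly_bounded_sum poly_bounded_add poly_bounded_mult poly_bounded_const
        poly_bounded_cmonomial)

lemma continuous_on_herm_form_dir_deriv: "continuous_on UNIV (herm_form_dir_deriv P v)"
  unfolding herm_form_dir_deriv_def by (intro continuous_intros)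

lemma continuous_on_monomial_dir_deriv: "continuous_on UNIV (monomial_dir_deriv a b v)"
  unfolding monomial_dir_deriv_def by (intro continuous_intros continuous_on_cmonomial)

lemma lborel_translate:
  fixes F :: "'a::euclidean_space \<Rightarrow> 'b::{banach, second_countable_topology}"
  assumes "F \<in> borel_measurable borel"
  shows "integrable lborel (\<lambda>z. F (c + z)) \<longleftrightarrow> integrable lborel F"
    and "integral\<^sup>L lborel (\<lambda>z. F (c + z)) = integral\<^sup>L lborel F"
proof -
  have c: "(+) c \<in> measurable lborel borel" by (simp add: measurable_lborel1)
  show "integrable lborel (\<lambda>z. F (c + z)) \<longleftrightarrow> integrable lborel F"
    using integrable_distr_eq[OF c assms] by (simp add: lborel_distr_plus)
  show "integral\<^sup>L lborel (\<lambda>z. F (c + z)) = integral\<^sup>L lborel F"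
    using integral_distr[OF c assms] by (simp add: lborel_distr_plus)
qed

text \<open>Integration by parts along a line: the difference quotients of \<open>F\<close> in direction \<open>v\<close>
  have integral \<open>0\<close> by translation invariance, and converge dominatedly to \<open>D\<close>.\<close>
lemma integral_line_derivative_eq_0:
  fixes F D W :: "'a::euclidean_space \<Rightarrow> _" and G :: "'a \<Rightarrow> complex \<Rightarrow> complex"
  assumes F_cont: "continuous_on UNIV F" and F_int: "integrable lborel F"
    and D_meas: "D \<in> borel_measurable lborel" and W_int: "integrable lborel W"
    and G_line: "\<And>z s. G z (complex_of_real s) = F (z + s *\<^sub>R v)"
    and G_deriv: "\<And>z s. (G z has_field_derivative D (z + s *\<^sub>R v)) (at (complex_of_real s))"
    and D_bound: "\<And>z s. \<bar>s\<bar> \<le> 1 \<Longrightarrow> norm (D (z + s *\<^sub>R v)) \<le> W z"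
  shows "integral\<^sup>L lborel D = 0"
proof -
  define t where "t = (\<lambda>n. inverse (real (Suc n)))"
  define q where "q = (\<lambda>n z. (F (z + t n *\<^sub>R v) - F z) / complex_of_real (t n))"
  have t: "t n > 0" "t n \<le> 1" for n by (auto simp: t_def field_simps)
  have G0: "G z 0 = F z" for z using G_line[of z 0] by simp
  have F_meas: "F \<in> borel_measurable borel" using F_cont by (rule borel_measurable_continuous_onI)
  have q_meas: "q n \<in> borel_measurable lborel" for n
  proof (rule borel_measurable_continuous_on_UNIV)
    have "continuous_on UNIV (\<lambda>z. F (z + t n *\<^sub>R v))"
      by (rule continuous_on_compose2[OF F_cont]) (auto intro: continuous_intros)
    then show "continuous_on UNIV (q n)"
      unfolding q_def using t(1)[of n] by (intro continuous_intros F_cont) auto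
  qed
  have q_lim: "(\<lambda>n. q n z) \<longlonglongrightarrow> D z" for z
  proof -
    have "((\<lambda>y. (G z y - G z 0) / (y - 0)) \<longlongrightarrow> D z) (at 0)"
      using G_deriv[of z 0] by (simp add: has_field_derivative_iff)
    moreover have "filterlim (\<lambda>n. complex_of_real (t n)) (at 0) sequentially"
    proof (rule filterlim_atI)
      show "((\<lambda>n. complex_of_real (t n)) \<longlongrightarrow> 0) sequentially"
        unfolding t_def using tendsto_of_real[OF LIMSEQ_inverse_real_of_nat, where 'a = complex]
        by (simp only: of_real_0)
      show "eventually (\<lambda>n. complex_of_real (t n) \<noteq> 0) sequentially"
        using t(1) by (intro always_eventually) (simp add: less_imp_neq[symmetric])
    qed
    ultimately have "((\<lambda>n. (G z (complex_of_real (t n)) - G z 0) / (complex_of_real (t n) - 0))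
        \<longlongrightarrow> D z) sequentially"
      by (rule filterlim_compose)
    then show ?thesis by (simp add: q_def G_line G0)
  qed
  have q_bound: "norm (q n z) \<le> W z" for n z
  proof -
    let ?S = "complex_of_real ` {-1..1}"
    have "convex ?S" by (rule convex_linear_image[OF linear_of_real convex_real_interval(5)])
    then have "norm (G z (complex_of_real (t n)) - G z 0) \<le> W z * norm (complex_of_real (t n) - 0)"
    proof (rule field_differentiable_bound)
      fix w assume "w \<in> ?S"
      then obtain s where s: "w = complex_of_real s" "s \<in> {-1..1}" by auto
      show "(G z has_field_derivative D (z + Re w *\<^sub>R v)) (at w within ?S)"
        unfolding s by (rule has_field_derivative_at_within) (simp add: G_deriv)
      show "norm (D (z + Re w *\<^sub>R v)) \<le> W z" unfolding s using s(2) by (intro D_bound) auto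
    next
      show "complex_of_real (t n) \<in> ?S" using t[of n] by auto
      show "0 \<in> ?S" by (auto intro!: image_eqI[of 0 _ 0])
    qed
    then show ?thesis using t[of n] by (simp add: q_def G_line G0 norm_divide divide_le_eq)
  qed
  have "integral\<^sup>L lborel (q n) = 0" for n
  proof -
    have "integrable lborel (\<lambda>z. F (t n *\<^sub>R v + z))"
      using lborel_translate(1)[OF F_meas] F_int by simp
    then have "integral\<^sup>L lborel (q n) =
        (integral\<^sup>L lborel (\<lambda>z. F (t n *\<^sub>R v + z)) - integral\<^sup>L lborel F) / complex_of_real (t n)"
      unfolding q_def using F_int by (simp add: add.commute)
    then show ?thesis by (simp add: lborel_translate(2)[OF F_meas])
  qed
  moreover have "(\<lambda>n. integral\<^sup>L lborel (q n)) \<longlonglongrightarrow> integral\<^sup>L lborel D"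
    by (rule integral_dominated_convergence[OF D_meas q_meas W_int]) (auto intro: q_lim q_bound)
  ultimately show ?thesis by (simp add: LIMSEQ_const_iff)
qed

section \<open>Wirtinger integration by parts against the Gaussian weight\<close>

lemma poly_bounded_weighted_monomial_dir_deriv_factor:
  "poly_bounded (\<lambda>z. monomial_dir_deriv a b v z - herm_form_dir_deriv P v z * cmonomial a b z)"
  by (intro poly_bounded_diff poly_bounded_mult poly_bounded_monomial_dir_deriv
      poly_bounded_herm_form_dir_deriv poly_bounded_cmonomial)

lemma continuous_on_weighted_monomial:
  "continuous_on UNIV (\<lambda>z. cmonomial a b z * gauss_weight P z)"
  by (intro continuous_on_mult continuous_on_cmonomial continuous_on_gauss_weight)

lemma continuous_on_weighted_monomial_dir_deriv:
  "continuous_on UNIV (weighted_monomial_dir_deriv P a b v)"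
  unfolding weighted_monomial_dir_deriv_def[abs_def]
  by (intro continuous_on_mult continuous_on_diff continuous_on_monomial_dir_deriv
      continuous_on_herm_form_dir_deriv continuous_on_cmonomial continuous_on_gauss_weight)

lemma weighted_monomial_dir_deriv_axis:
  "weighted_monomial_dir_deriv P a b (axis j c) z =
     (of_nat (a j) * c * cmonomial (a(j := a j - 1)) b z
      + of_nat (b j) * cnj c * cmonomial a (b(j := b j - 1)) z
      - (cnj c * (P *v z)$j + c * (\<Sum>i\<in>UNIV. cnj (z$i) * P$i$j)) * cmonomial a b z) * gauss_weight P z"
proof -
  have "monomial_dir_deriv a b (axis j c) z =
      of_nat (a j) * c * cmonomial (a(j := a j - 1)) b z + of_nat (b j) * cnj c * cmonomial a (b(j := b j - 1)) z"
    unfolding monomial_dir_deriv_def by (subst sum.remove[of UNIV j]) (auto simp: axis_def)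
  moreover have "herm_form_dir_deriv P (axis j c) z = cnj c * (P *v z)$j + c * (\<Sum>i\<in>UNIV. cnj (z$i) * P$i$j)"
  proof -
    have "(\<Sum>i\<in>UNIV. \<Sum>k\<in>UNIV. cnj (axis j c $ i) * P$i$k * z$k) = cnj c * (P *v z)$j"
      by (subst sum.remove[of UNIV j])
         (auto simp: axis_def matrix_vector_mult_def sum_distrib_left mult.assoc)
    moreover have "(\<Sum>k\<in>UNIV. cnj (z$i) * P$i$k * axis j c $ k) = c * (cnj (z$i) * P$i$j)" for i
      by (subst sum.remove[of UNIV j]) (auto simp: axis_def)
    ultimately show ?thesis
      by (simp add: herm_form_dir_deriv_def sum.distrib sum_distrib_left)
  qed
  ultimately show ?thesis by (simp add: weighted_monomial_dir_deriv_def)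
qed

context
  fixes P :: "complex^'n^'n" and l :: real
  assumes l_pos: "l > 0" and coercive: "\<And>z. l * (norm z)\<^sup>2 \<le> Re (herm_form P z)"
begin

lemma norm_gauss_weight_le: "norm (gauss_weight P z) \<le> exp (- l * (norm z)\<^sup>2)"
  using coercive[of z] by (simp add: gauss_weight_def)

lemma poly_bounded_times_gauss_weight_bound:
  assumes "poly_bounded p"
  obtains C K where "C \<ge> 0"
    "\<And>z. norm (p z * gauss_weight P z) \<le> C * (1 + norm z) ^ K * exp (- l * (norm z)\<^sup>2)"
proof -
  obtain C K where C: "C \<ge> 0" "\<And>z. norm (p z) \<le> C * (1 + norm z) ^ K"
    using poly_boundedE[OF assms] by blast
  have "norm (p z * gauss_weight P z) \<le> C * (1 + norm z) ^ K * exp (- l * (norm z)\<^sup>2)" for z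
    unfolding norm_mult using C by (intro mult_mono norm_gauss_weight_le) auto
  with C(1) show thesis by (rule that)
qed

lemma integrable_poly_bounded_times_gauss_weight:
  assumes "continuous_on UNIV p" "poly_bounded p"
  shows "integrable lborel (\<lambda>z. p z * gauss_weight P z)"
proof -
  obtain C K where "\<And>z. norm (p z * gauss_weight P z) \<le> C * (1 + norm z) ^ K * exp (- l * (norm z)\<^sup>2)"
    using poly_bounded_times_gauss_weight_bound[OF assms(2)] by blast
  moreover have "(\<lambda>z. p z * gauss_weight P z) \<in> borel_measurable lborel"
    using assms(1) continuous_on_gauss_weight
    by (intro borel_measurable_continuous_on_UNIV continuous_intros)
  ultimately show ?thesis using l_pos by (intro integrable_gaussian_bounded) auto
qed

lemma integrable_weighted_monomial: "integrable lborel (\<lambda>z. cmonomial a b z * gauss_weight P z)"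
  by (rule integrable_poly_bounded_times_gauss_weight[OF continuous_on_cmonomial poly_bounded_cmonomial])

lemma integrable_weighted_monomial_dir_deriv:
  "integrable lborel (weighted_monomial_dir_deriv P a b v)"
  unfolding weighted_monomial_dir_deriv_def[abs_def]
  by (intro integrable_poly_bounded_times_gauss_weight poly_bounded_weighted_monomial_dir_deriv_factor
      continuous_on_diff continuous_on_mult continuous_on_monomial_dir_deriv
      continuous_on_herm_form_dir_deriv continuous_on_cmonomial)

lemma integral_weighted_monomial_dir_deriv:
  "integral\<^sup>L lborel (weighted_monomial_dir_deriv P a b v) = 0"
proof -
  obtain C K where "C \<ge> 0" and bound:
    "\<And>z. norm (weighted_monomial_dir_deriv P a b v z) \<le> C * (1 + norm z) ^ K * exp (- l * (norm z)\<^sup>2)"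
    using poly_bounded_times_gauss_weight_bound[OF poly_bounded_weighted_monomial_dir_deriv_factor]
    unfolding weighted_monomial_dir_deriv_def[abs_def] by blast
  define W where "W = (\<lambda>z::complex^'n.
    (C * (1 + norm v) ^ K * exp (l * (norm v)\<^sup>2)) * (1 + norm z) ^ K * exp (- (l/2) * (norm z)\<^sup>2))"
  have W_int: "integrable lborel W"
  proof (rule integrable_gaussian_bounded)
    show "W \<in> borel_measurable lborel"
      unfolding W_def by (rule borel_measurable_continuous_on_UNIV) (intro continuous_intros)
    show "norm (W z) \<le> (C * (1 + norm v) ^ K * exp (l * (norm v)\<^sup>2)) * (1 + norm z) ^ K
                         * exp (- (l/2) * (norm z)\<^sup>2)" for z
      using \<open>C \<ge> 0\<close> by (simp add: W_def abs_mult)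
  qed (use l_pos in simp)
  have W_bound: "norm (weighted_monomial_dir_deriv P a b v (z + s *\<^sub>R v)) \<le> W z"
    if "\<bar>s\<bar> \<le> 1" for z s
    unfolding W_def using that l_pos \<open>C \<ge> 0\<close>
    by (intro gaussian_bound_translate[OF bound]) (auto simp: mult_left_le_one_le)
  show ?thesis
    by (rule integral_line_derivative_eq_0[OF continuous_on_weighted_monomial integrable_weighted_monomial
          borel_measurable_continuous_on_UNIV[OF continuous_on_weighted_monomial_dir_deriv] W_int
          line_continuation_of_real has_field_derivative_line_continuation W_bound])
qed

text \<open>The two Wirtinger derivatives \<open>\<partial>/\<partial>z\<^sub>j\<close> and \<open>\<partial>/\<partial>(cnj z\<^sub>j)\<close> are combinations of the real
  directional derivatives along \<open>axis j 1\<close> and \<open>axis j \<i>\<close>; each isolates one factor.\<close>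
lemma has_bochner_integral_mult_vec_weighted_monomial:
  "has_bochner_integral lborel (\<lambda>z. (P *v z)$j * cmonomial a b z * gauss_weight P z)
     (of_nat (b j) * gauss_moment P a (b(j := b j - 1)))"
proof -
  have eq: "(\<lambda>z. (P *v z)$j * cmonomial a b z * gauss_weight P z) =
     (\<lambda>z. of_nat (b j) * (cmonomial a (b(j := b j - 1)) z * gauss_weight P z)
        - (weighted_monomial_dir_deriv P a b (axis j 1) z
           + \<i> * weighted_monomial_dir_deriv P a b (axis j \<i>) z) / 2)"
    by (rule ext, simp add: weighted_monomial_dir_deriv_axis algebra_simps) (simp add: field_simps)
  show ?thesis
    unfolding has_bochner_integral_iff eq
    using integrable_weighted_monomial integrable_weighted_monomial_dir_deriv
    by (auto simp: gauss_moment_def integral_weighted_monomial_dir_deriv)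
qed

lemma has_bochner_integral_vec_mult_weighted_monomial:
  "has_bochner_integral lborel (\<lambda>z. (\<Sum>i\<in>UNIV. cnj (z$i) * P$i$j) * cmonomial a b z * gauss_weight P z)
     (of_nat (a j) * gauss_moment P (a(j := a j - 1)) b)"
proof -
  have eq: "(\<lambda>z. (\<Sum>i\<in>UNIV. cnj (z$i) * P$i$j) * cmonomial a b z * gauss_weight P z) =
     (\<lambda>z. of_nat (a j) * (cmonomial (a(j := a j - 1)) b z * gauss_weight P z)
        - (weighted_monomial_dir_deriv P a b (axis j 1) z
           - \<i> * weighted_monomial_dir_deriv P a b (axis j \<i>) z) / 2)"
    by (rule ext, simp add: weighted_monomial_dir_deriv_axis algebra_simps) (simp add: field_simps)
  show ?thesis
    unfolding has_bochner_integral_iff eq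
    using integrable_weighted_monomial integrable_weighted_monomial_dir_deriv
    by (auto simp: gauss_moment_def integral_weighted_monomial_dir_deriv)
qed

end

section \<open>Wick recurrences\<close>

lemma herm_pos_def_coercive:
  fixes S :: "complex^'n^'n"
  assumes "herm_pos_def S"
  obtains l where "l > 0" "\<And>z. l * (norm z)\<^sup>2 \<le> Re (herm_form (matrix_inv S) z)"
  using herm_form_coercive herm_form_matrix_inv_pos[OF assms] by metis

lemma gauss_moment_Suc_left:
  fixes S :: "complex^'n^'n"
  assumes "herm_pos_def S"
  shows "gauss_moment (matrix_inv S) (a(h := Suc (a h))) b =
    (\<Sum>k\<in>UNIV. S$h$k * of_nat (b k) * gauss_moment (matrix_inv S) a (b(k := b k - 1)))"
proof -
  let ?P = "matrix_inv S"
  obtain l where l: "l > 0" "\<And>z. l * (norm z)\<^sup>2 \<le> Re (herm_form ?P z)"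
    using herm_pos_def_coercive[OF assms] by blast
  have z_h: "z$h = (\<Sum>k\<in>UNIV. S$h$k * (?P *v z)$k)" for z
  proof -
    have "S *v (?P *v z) = z"
      using herm_pos_def_matrix_inv[OF assms] by (simp add: matrix_vector_mul_assoc)
    then show ?thesis by (simp add: matrix_vector_mult_def vec_eq_iff)
  qed
  have "has_bochner_integral lborel
      (\<lambda>z. \<Sum>k\<in>UNIV. S$h$k * ((?P *v z)$k * cmonomial a b z * gauss_weight ?P z))
      (\<Sum>k\<in>UNIV. S$h$k * (of_nat (b k) * gauss_moment ?P a (b(k := b k - 1))))"
    by (intro has_bochner_integral_sum has_bochner_integral_mult_right
        has_bochner_integral_mult_vec_weighted_monomial[OF l])
  moreover have "(\<lambda>z. \<Sum>k\<in>UNIV. S$h$k * ((?P *v z)$k * cmonomial a b z * gauss_weight ?P z))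
      = (\<lambda>z. cmonomial (a(h := Suc (a h))) b z * gauss_weight ?P z)"
  proof
    fix z
    have "cmonomial (a(h := Suc (a h))) b z * gauss_weight ?P z
        = (\<Sum>k\<in>UNIV. S$h$k * (?P *v z)$k) * (cmonomial a b z * gauss_weight ?P z)"
      by (simp add: cmonomial_Suc_left mult.assoc flip: z_h)
    then show "(\<Sum>k\<in>UNIV. S$h$k * ((?P *v z)$k * cmonomial a b z * gauss_weight ?P z))
        = cmonomial (a(h := Suc (a h))) b z * gauss_weight ?P z"
      by (simp add: sum_distrib_right mult.assoc)
  qed
  ultimately show ?thesis
    unfolding gauss_moment_def by (simp add: has_bochner_integral_integral_eq mult.assoc)
qed

lemma gauss_moment_Suc_right:
  fixes S :: "complex^'n^'n"
  assumes "herm_pos_def S"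
  shows "gauss_moment (matrix_inv S) a (b(k := Suc (b k))) =
    (\<Sum>h\<in>UNIV. S$h$k * of_nat (a h) * gauss_moment (matrix_inv S) (a(h := a h - 1)) b)"
proof -
  let ?P = "matrix_inv S"
  obtain l where l: "l > 0" "\<And>z. l * (norm z)\<^sup>2 \<le> Re (herm_form ?P z)"
    using herm_pos_def_coercive[OF assms] by blast
  have z_k: "cnj (z$k) = (\<Sum>h\<in>UNIV. (\<Sum>i\<in>UNIV. cnj (z$i) * ?P$i$h) * S$h$k)" for z
  proof -
    have "(\<Sum>h\<in>UNIV. (\<Sum>i\<in>UNIV. cnj (z$i) * ?P$i$h) * S$h$k)
        = (\<Sum>h\<in>UNIV. \<Sum>i\<in>UNIV. cnj (z$i) * ?P$i$h * S$h$k)"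
      by (simp only: sum_distrib_right)
    also have "\<dots> = (\<Sum>i\<in>UNIV. \<Sum>h\<in>UNIV. cnj (z$i) * ?P$i$h * S$h$k)"
      by (rule sum.swap)
    also have "\<dots> = (\<Sum>i\<in>UNIV. cnj (z$i) * (?P ** S)$i$k)"
      by (simp only: matrix_matrix_mult_def vec_lambda_beta sum_distrib_left mult.assoc)
    also have "\<dots> = (\<Sum>i\<in>UNIV. if i = k then cnj (z$k) else 0)"
      using herm_pos_def_matrix_inv[OF assms] by (intro sum.cong refl) (auto simp: mat_def)
    finally show ?thesis by simp
  qed
  have "has_bochner_integral lborel
      (\<lambda>z. \<Sum>h\<in>UNIV. S$h$k * ((\<Sum>i\<in>UNIV. cnj (z$i) * ?P$i$h) * cmonomial a b z * gauss_weight ?P z))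
      (\<Sum>h\<in>UNIV. S$h$k * (of_nat (a h) * gauss_moment ?P (a(h := a h - 1)) b))"
    by (intro has_bochner_integral_sum has_bochner_integral_mult_right
        has_bochner_integral_vec_mult_weighted_monomial[OF l])
  moreover have "(\<lambda>z. \<Sum>h\<in>UNIV. S$h$k * ((\<Sum>i\<in>UNIV. cnj (z$i) * ?P$i$h) * cmonomial a b z * gauss_weight ?P z))
      = (\<lambda>z. cmonomial a (b(k := Suc (b k))) z * gauss_weight ?P z)"
  proof
    fix z
    have "cmonomial a (b(k := Suc (b k))) z * gauss_weight ?P z
        = (\<Sum>h\<in>UNIV. (\<Sum>i\<in>UNIV. cnj (z$i) * ?P$i$h) * S$h$k) * (cmonomial a b z * gauss_weight ?P z)"
      by (simp add: cmonomial_Suc_right mult.assoc flip: z_k)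
    also have "\<dots> = (\<Sum>h\<in>UNIV. S$h$k * ((\<Sum>i\<in>UNIV. cnj (z$i) * ?P$i$h) * cmonomial a b z * gauss_weight ?P z))"
      by (simp only: sum_distrib_right) (rule sum.cong; simp add: sum_distrib_left sum_distrib_right mult_ac)
    finally show "(\<Sum>h\<in>UNIV. S$h$k * ((\<Sum>i\<in>UNIV. cnj (z$i) * ?P$i$h) * cmonomial a b z * gauss_weight ?P z))
        = cmonomial a (b(k := Suc (b k))) z * gauss_weight ?P z"
      by (rule sym)
  qed
  ultimately show ?thesis
    unfolding gauss_moment_def by (simp add: has_bochner_integral_integral_eq mult.assoc)
qed

theorem theorem3p11:
  fixes S :: "complex^'n^'n" and nn mm :: "'n \<Rightarrow> nat"
  assumes "herm_pos_def S"
  assumes "(\<exists>h \<in> Nset nn. SN S mm h = {}) \<or> (\<exists>k \<in> Mset mm. SM S nn k = {})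
           \<or> ((\<forall>h \<in> Nset nn. SN S mm h \<noteq> {}) \<and>
              (\<exists>Mr \<in> M_blocks S nn mm.
                 (\<Sum>i \<in> {i \<in> Nset nn. SN S mm i \<subseteq> Mr}. nn i) \<noteq> (\<Sum>j \<in> Mr. mm j)))"
  shows "cgauss_moment S nn mm = 0"
proof -
  have "\<nexists>c. supported_coupling S nn mm c"
    using assms(2) by (intro no_supported_coupling) blast
  then have "gauss_moment (matrix_inv S) nn mm = 0"
    by (rule vanishes_without_supported_coupling[OF gauss_moment_Suc_left[OF assms(1)]
          gauss_moment_Suc_right[OF assms(1)]])
  moreover have "cgauss_moment S nn mm =
      gauss_moment (matrix_inv S) nn mm / (complex_of_real (pi ^ CARD('n)) * det S)"
    unfolding cgauss_moment_def cgauss_density_def gauss_moment_def cmonomial_def gauss_weight_def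
    by (simp add: integral_divide_zero)
  ultimately show ?thesis by simp
qed

end
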